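(* Suppose $f\colon[0,\infty)\to[0,\infty)$ satisfies (M), (S) and (L). Then for any $\varepsilon\in(0,q_f)$ there exists $C\ge1$ such that $$C^{-1}\sigma^{\varepsilon-q_f}\le f(F^{-1}(\sigma))\le C\sigma^{-\varepsilon-q_f}\quad\text{and}\quad F^{-1}(\sigma)\le C\sigma^{1-q_f-\varepsilon}$$ for all sufficiently small $\sigma>0$.
   Context: (M) $f$ continuous, nondecreasing, $f(u)>0$ for $u>0$. (S) there is $\tau_0>0$ with $f\in C^1([\tau_0,\infty))$ and $\int_{\tau_0}^\infty ds/f(s)<\infty$. $F(u)=\int_u^\infty ds/f(s)$ for $u>0$, $F_0=\lim_{u\to0}F(u)$; $F$ is a strictly decreasing bijection $(0,\infty)\to(0,F_0)$ with inverse $F^{-1}\colon(0,F_0)\to(0,\infty)$. (L) $q_f:=\lim_{u\to\infty}f'(u)F(u)$ exists and is finite. *)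

theory Defs
  imports "HOL-Analysis.Analysis"
begin

definition bigF :: "(real \<Rightarrow> real) \<Rightarrow> real \<Rightarrow> real" where
  "bigF f u = integral {u..} (\<lambda>s. 1 / f s)"

definition bigF_inv :: "(real \<Rightarrow> real) \<Rightarrow> real \<Rightarrow> real" where
  "bigF_inv f \<sigma> = inv_into {0<..} (bigF f) \<sigma>"

end

theory Submission
  imports Defs
begin

(* Since F' = -1/f, the function f F^a has derivative F^(a-1) (f' F - a). As f' F -> q, it is
   eventually nondecreasing for a < q and nonincreasing for a > q, so f(u) is squeezed between
   multiples of F(u)^(-q+eps) and F(u)^(-q-eps). A bound f F^a <= c controls
   (F^(1-a))' = (a-1) / (f F^a): for a > 1 the power F^(1-a) grows at least linearly in u, which
   bounds u by a multiple of F(u)^(1-a); for a < 1 it would eventually become negative, which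
   forces q >= 1. Substituting u = F^-1(sigma) gives the three estimates. *)

lemma eventually_at_top_threshold:
  fixes b :: real
  assumes "\<forall>\<^sub>F x in at_top. P x"
  obtains T where "b < T" "\<And>x. T \<le> x \<Longrightarrow> P x"
proof -
  obtain N where "\<And>x. N \<le> x \<Longrightarrow> P x"
    using assms by (auto simp: eventually_at_top_linorder)
  then show thesis
    using that[of "max N (b + 1)"] by auto
qed

lemma le_mult_powr_iff: "0 < x \<Longrightarrow> c \<le> y * x powr a \<longleftrightarrow> c * x powr - a \<le> y"
  for x y c a :: real
  by (simp add: powr_minus field_simps)

lemma mult_powr_le_iff: "0 < x \<Longrightarrow> y * x powr a \<le> c \<longleftrightarrow> y \<le> c * x powr - a"
  for x y c a :: real
  by (simp add: powr_minus field_simps)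

lemma has_integral_atLeast_split:
  fixes g :: "real \<Rightarrow> real"
  assumes "g integrable_on {u..v}" "g integrable_on {v..}" "u \<le> v"
  shows "(g has_integral integral {u..v} g + integral {v..} g) {u..}"
proof -
  have "{u..v} \<inter> {v..} = {v}" "{u..v} \<union> {v..} = {u..}"
    using assms(3) by auto
  then show ?thesis
    using has_integral_Un[of g _ "{u..v}" _ "{v..}"] assms(1,2) by (simp add: integrable_integral)
qed

locale blowup_nonlinearity =
  fixes f :: "real \<Rightarrow> real" and \<tau>0 :: real
  assumes continuous_f: "continuous_on {0..} f"
    and mono_f: "mono_on {0..} f"
    and f_pos: "\<And>u. 0 < u \<Longrightarrow> 0 < f u"
    and \<tau>0_pos: "0 < \<tau>0"
    and integrable_inverse_f_tail: "(\<lambda>s. 1 / f s) integrable_on {\<tau>0..}"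
begin

lemma f_nonzero: "0 < u \<Longrightarrow> f u \<noteq> 0"
  using f_pos by force

lemma continuous_on_inverse_f:
  assumes "0 < u"
  shows "continuous_on {u..v} (\<lambda>s. 1 / f s)"
  using assms by (intro continuous_intros continuous_on_subset[OF continuous_f] ballI f_nonzero) auto

lemma integrable_inverse_f_Icc: "0 < u \<Longrightarrow> (\<lambda>s. 1 / f s) integrable_on {u..v}"
  by (rule integrable_continuous_interval[OF continuous_on_inverse_f])

lemma absolutely_integrable_inverse_f_tail: "(\<lambda>s. 1 / f s) absolutely_integrable_on {\<tau>0..}"
  using integrable_inverse_f_tail \<tau>0_pos f_pos
  by (intro nonnegative_absolutely_integrable_1) (auto intro: less_imp_le)

lemma integrable_inverse_f_atLeast:
  assumes "0 < u"
  shows "(\<lambda>s. 1 / f s) integrable_on {u..}"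
proof (cases "\<tau>0 \<le> u")
  case True
  have "(\<lambda>s. 1 / f s) absolutely_integrable_on {u..}"
    by (rule set_integrable_subset[OF absolutely_integrable_inverse_f_tail]) (use True in auto)
  then show ?thesis
    using set_lebesgue_integral_eq_integral(1) by blast
next
  case False
  then show ?thesis
    using has_integral_atLeast_split[OF integrable_inverse_f_Icc[OF assms] integrable_inverse_f_tail] by auto
qed

lemma bigF_split:
  assumes "0 < u" "u \<le> v"
  shows "bigF f u = integral {u..v} (\<lambda>s. 1 / f s) + bigF f v"
proof -
  have "((\<lambda>s. 1 / f s) has_integral integral {u..v} (\<lambda>s. 1 / f s) + bigF f v) {u..}"
    unfolding bigF_def using assms
    by (intro has_integral_atLeast_split integrable_inverse_f_Icc integrable_inverse_f_atLeast) auto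
  then show ?thesis
    unfolding bigF_def by (simp add: integral_unique)
qed

lemma integral_inverse_f_ge:
  assumes "0 < u" "u \<le> v"
  shows "(v - u) / f v \<le> integral {u..v} (\<lambda>s. 1 / f s)"
proof -
  have "integral {u..v} (\<lambda>_. 1 / f v) \<le> integral {u..v} (\<lambda>s. 1 / f s)"
    using assms integrable_inverse_f_Icc f_pos mono_f
    by (intro integral_le) (auto intro!: divide_left_mono simp: mono_on_def)
  then show ?thesis
    using assms by simp
qed

lemma bigF_nonneg: "0 < u \<Longrightarrow> 0 \<le> bigF f u"
  unfolding bigF_def using f_pos
  by (intro integral_nonneg integrable_inverse_f_atLeast) (auto intro: less_imp_le)

lemma bigF_strict_antimono:
  assumes "0 < u" "u < v"
  shows "bigF f v < bigF f u"
proof -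
  have "0 < (v - u) / f v"
    using assms f_pos[of v] by simp
  then show ?thesis
    using bigF_split[of u v] integral_inverse_f_ge[of u v] assms by linarith
qed

lemma bigF_pos: "0 < u \<Longrightarrow> 0 < bigF f u"
  using bigF_strict_antimono[of u "u + 1"] bigF_nonneg[of "u + 1"] by simp

lemma inj_on_bigF: "inj_on (bigF f) {0<..}"
  by (rule inj_onI) (metis bigF_strict_antimono greaterThan_iff less_irrefl linorder_neqE)

lemma has_real_derivative_bigF:
  assumes "0 < x"
  shows "(bigF f has_real_derivative - (1 / f x)) (at x)"
proof -
  have "((\<lambda>v. integral {x/2..v} (\<lambda>s. 1 / f s)) has_real_derivative 1 / f x) (at x within {x/2..x+1})"
    unfolding has_real_derivative_iff_has_vector_derivative
    using assms by (intro integral_has_vector_derivative continuous_on_inverse_f) auto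
  then have "((\<lambda>v. bigF f (x/2) - integral {x/2..v} (\<lambda>s. 1 / f s)) has_real_derivative - (1 / f x))
      (at x within {x/2..x+1})"
    by (intro derivative_eq_intros) auto
  then have "(bigF f has_real_derivative - (1 / f x)) (at x within {x/2..x+1})"
    by (rule has_field_derivative_transform_within[where d=1]) (use assms bigF_split in auto)
  then show ?thesis
    using at_within_Icc_at[of "x/2" x "x+1"] assms by simp
qed

lemma isCont_bigF: "0 < x \<Longrightarrow> isCont (bigF f) x"
  using DERIV_isCont[OF has_real_derivative_bigF] .

lemma bigF_tendsto_0: "(bigF f \<longlongrightarrow> 0) at_top"
proof -
  have "((\<lambda>v. LINT s:{\<tau>0..v}|lebesgue. 1 / f s) \<longlongrightarrow> (LINT s:{\<tau>0..}|lebesgue. 1 / f s)) at_top"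
    by (intro tendsto_set_lebesgue_integral_at_top absolutely_integrable_inverse_f_tail) auto
  moreover have "(LINT s:{\<tau>0..}|lebesgue. 1 / f s) = bigF f \<tau>0"
    unfolding bigF_def using absolutely_integrable_inverse_f_tail by (rule set_lebesgue_integral_eq_integral)
  ultimately have "((\<lambda>v. bigF f \<tau>0 - (LINT s:{\<tau>0..v}|lebesgue. 1 / f s)) \<longlongrightarrow> 0) at_top"
    using tendsto_diff[OF tendsto_const, of _ _ _ "bigF f \<tau>0"] by fastforce
  moreover have "\<forall>\<^sub>F v in at_top. bigF f \<tau>0 - (LINT s:{\<tau>0..v}|lebesgue. 1 / f s) = bigF f v"
  proof (intro eventually_at_top_linorderI)
    fix v assume "\<tau>0 \<le> v"
    have "(\<lambda>s. 1 / f s) absolutely_integrable_on {\<tau>0..v}"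
      by (rule set_integrable_subset[OF absolutely_integrable_inverse_f_tail]) auto
    then show "bigF f \<tau>0 - (LINT s:{\<tau>0..v}|lebesgue. 1 / f s) = bigF f v"
      using bigF_split[OF \<tau>0_pos \<open>\<tau>0 \<le> v\<close>] by (simp add: set_lebesgue_integral_eq_integral)
  qed
  ultimately show ?thesis
    by (rule Lim_transform_eventually)
qed

lemma bigF_inv_bigF: "0 < u \<Longrightarrow> bigF_inv f (bigF f u) = u"
  unfolding bigF_inv_def by (simp add: inj_on_bigF)

lemma bigF_inv_gt:
  assumes "0 < v" "0 < \<sigma>" "\<sigma> < bigF f v"
  shows "v < bigF_inv f \<sigma>" "bigF f (bigF_inv f \<sigma>) = \<sigma>"
proof -
  have "\<forall>\<^sub>F b in at_top. v \<le> b \<and> bigF f b < \<sigma>"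
    using order_tendstoD(2)[OF bigF_tendsto_0 assms(2)] eventually_ge_at_top[of v]
    by eventually_elim simp
  then obtain b where "v \<le> b" "bigF f b < \<sigma>"
    using eventually_happens'[OF trivial_limit_at_top_linorder] by blast
  moreover have "\<forall>x. v \<le> x \<and> x \<le> b \<longrightarrow> isCont (bigF f) x"
    using assms(1) isCont_bigF by auto
  ultimately obtain u where u: "v \<le> u" "bigF f u = \<sigma>"
    using IVT2[of "bigF f" b \<sigma> v] assms(3) by auto
  then have "v < u"
    using assms(3) by (cases "u = v") auto
  then show "v < bigF_inv f \<sigma>" "bigF f (bigF_inv f \<sigma>) = \<sigma>"
    using u assms(1) bigF_inv_bigF[of u] by auto
qed

lemma eventually_bigF_bigF_inv: "\<forall>\<^sub>F \<sigma> in at_right 0. bigF f (bigF_inv f \<sigma>) = \<sigma>"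
  using eventually_at_right_real[OF bigF_pos[OF \<tau>0_pos]]
  by eventually_elim (use bigF_inv_gt \<tau>0_pos in auto)

lemma filterlim_bigF_inv_at_top: "filterlim (bigF_inv f) at_top (at_right 0)"
proof (subst filterlim_at_top_gt[where c=0], intro allI impI)
  fix Z :: real assume "0 < Z"
  show "\<forall>\<^sub>F \<sigma> in at_right 0. Z \<le> bigF_inv f \<sigma>"
    using eventually_at_right_real[OF bigF_pos[OF \<open>0 < Z\<close>]]
    by eventually_elim (use bigF_inv_gt \<open>0 < Z\<close> in \<open>auto intro: less_imp_le\<close>)
qed

lemma f_bigF_powr_pos:
  assumes "0 < x"
  shows "0 < f x * bigF f x powr a"
  using f_pos[OF assms] bigF_pos[OF assms] by simp

lemma has_real_derivative_f_bigF_powr: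
  assumes "0 < x" and f_deriv: "(f has_real_derivative d) (at x)"
  shows "((\<lambda>u. f u * bigF f u powr a) has_real_derivative
           bigF f x powr (a - 1) * (d * bigF f x - a)) (at x)"
proof -
  have "((\<lambda>u. f u * bigF f u powr a) has_real_derivative
      d * bigF f x powr a + (a * bigF f x powr (a - 1) * - (1 / f x)) * f x) (at x)"
    using DERIV_mult[OF f_deriv DERIV_fun_powr[OF has_real_derivative_bigF bigF_pos]] assms(1) by simp
  moreover have "bigF f x powr a = bigF f x powr (a - 1) * bigF f x"
    using powr_add[of "bigF f x" "a - 1" 1] bigF_pos[OF assms(1)] by simp
  ultimately show ?thesis
    using f_nonzero[OF assms(1)] by (simp add: algebra_simps)
qed

lemma has_real_derivative_bigF_powr:
  assumes "0 < x"
  shows "((\<lambda>u. bigF f u powr (1 - a)) has_real_derivative (a - 1) / (f x * bigF f x powr a)) (at x)"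
proof -
  have "((\<lambda>u. bigF f u powr (1 - a)) has_real_derivative
      (1 - a) * bigF f x powr (1 - a - of_nat 1) * - (1 / f x)) (at x)"
    by (rule DERIV_fun_powr[OF has_real_derivative_bigF[OF assms] bigF_pos[OF assms]])
  then show ?thesis
    by (rule DERIV_cong) (use bigF_pos[OF assms] f_nonzero[OF assms] in \<open>simp add: powr_minus field_simps\<close>)
qed

lemma f_bigF_powr_mono:
  assumes "0 < T" "T \<le> u"
    and f': "\<And>x. T \<le> x \<Longrightarrow> (f has_real_derivative f' x) (at x)"
    and "\<And>x. T \<le> x \<Longrightarrow> a \<le> f' x * bigF f x"
  shows "f T * bigF f T powr a \<le> f u * bigF f u powr a"
proof (rule DERIV_nonneg_imp_nondecreasing[OF assms(2)])
  fix x assume "T \<le> x"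
  then show "\<exists>y. ((\<lambda>u. f u * bigF f u powr a) has_real_derivative y) (at x) \<and> 0 \<le> y"
    using has_real_derivative_f_bigF_powr[OF _ f'] assms by (intro exI conjI) auto
qed

lemma f_bigF_powr_antimono:
  assumes "0 < T" "T \<le> u"
    and f': "\<And>x. T \<le> x \<Longrightarrow> (f has_real_derivative f' x) (at x)"
    and "\<And>x. T \<le> x \<Longrightarrow> f' x * bigF f x \<le> a"
  shows "f u * bigF f u powr a \<le> f T * bigF f T powr a"
proof (rule DERIV_nonpos_imp_nonincreasing[OF assms(2)])
  fix x assume "T \<le> x"
  then show "\<exists>y. ((\<lambda>u. f u * bigF f u powr a) has_real_derivative y) (at x) \<and> y \<le> 0"
    using has_real_derivative_f_bigF_powr[OF _ f'] assms
    by (intro exI conjI) (auto intro: mult_nonneg_nonpos)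
qed

lemma bigF_powr_ge_linear:
  assumes "0 < T" "T \<le> u" "1 < a" "0 < c"
    and bound: "\<And>x. T \<le> x \<Longrightarrow> f x * bigF f x powr a \<le> c"
  shows "bigF f T powr (1 - a) + (a - 1) / c * (u - T) \<le> bigF f u powr (1 - a)"
proof -
  have "bigF f T powr (1 - a) - (a - 1) / c * T \<le> bigF f u powr (1 - a) - (a - 1) / c * u"
  proof (rule DERIV_nonneg_imp_nondecreasing[OF assms(2)])
    fix x assume "T \<le> x"
    then have "0 < f x * bigF f x powr a"
      using assms(1) f_bigF_powr_pos by simp
    then have "(a - 1) / c \<le> (a - 1) / (f x * bigF f x powr a)"
      using bound[OF \<open>T \<le> x\<close>] assms(3) by (intro divide_left_mono) auto
    moreover have "((\<lambda>u. bigF f u powr (1 - a) - (a - 1) / c * u) has_real_derivative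
        (a - 1) / (f x * bigF f x powr a) - (a - 1) / c * 1) (at x)"
      using \<open>T \<le> x\<close> assms(1)
      by (intro DERIV_diff DERIV_cmult DERIV_ident has_real_derivative_bigF_powr) auto
    ultimately show "\<exists>y. ((\<lambda>u. bigF f u powr (1 - a) - (a - 1) / c * u) has_real_derivative y) (at x) \<and> 0 \<le> y"
      by auto
  qed
  then show ?thesis
    unfolding right_diff_distrib by linarith
qed

lemma bigF_powr_le_linear:
  assumes "0 < T" "T \<le> u" "a < 1" "0 < c"
    and bound: "\<And>x. T \<le> x \<Longrightarrow> f x * bigF f x powr a \<le> c"
  shows "bigF f u powr (1 - a) \<le> bigF f T powr (1 - a) - (1 - a) / c * (u - T)"
proof -
  have "bigF f u powr (1 - a) + (1 - a) / c * u \<le> bigF f T powr (1 - a) + (1 - a) / c * T"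
  proof (rule DERIV_nonpos_imp_nonincreasing[OF assms(2)])
    fix x assume "T \<le> x"
    then have "0 < f x * bigF f x powr a"
      using assms(1) f_bigF_powr_pos by simp
    then have "(a - 1) / (f x * bigF f x powr a) \<le> (a - 1) / c"
      using bound[OF \<open>T \<le> x\<close>] assms(3,4) by (intro divide_left_mono_neg) auto
    moreover have "((\<lambda>u. bigF f u powr (1 - a) + (1 - a) / c * u) has_real_derivative
        (a - 1) / (f x * bigF f x powr a) + (1 - a) / c * 1) (at x)"
      using \<open>T \<le> x\<close> assms(1)
      by (intro DERIV_add DERIV_cmult DERIV_ident has_real_derivative_bigF_powr) auto
    ultimately show "\<exists>y. ((\<lambda>u. bigF f u powr (1 - a) + (1 - a) / c * u) has_real_derivative y) (at x) \<and> y \<le> 0"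
      by (intro exI conjI) (auto simp: diff_divide_distrib)
  qed
  then show ?thesis
    unfolding right_diff_distrib by linarith
qed

lemma f_bigF_powr_unbounded:
  assumes "a < 1" "0 < c"
  shows "\<not> (\<forall>\<^sub>F x in at_top. f x * bigF f x powr a \<le> c)"
proof
  assume "\<forall>\<^sub>F x in at_top. f x * bigF f x powr a \<le> c"
  then obtain T where "0 < T" and bound: "\<And>x. T \<le> x \<Longrightarrow> f x * bigF f x powr a \<le> c"
    using eventually_at_top_threshold[where b = 0] by blast
  define u where "u = T + c / (1 - a) * (bigF f T powr (1 - a) + 1)"
  have "T \<le> u"
    unfolding u_def using assms by simp
  moreover have "(1 - a) / c * (u - T) = bigF f T powr (1 - a) + 1"
    unfolding u_def using assms by simp
  ultimately have "bigF f u powr (1 - a) \<le> -1"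
    using bigF_powr_le_linear[OF \<open>0 < T\<close> _ assms(1,2) bound] by fastforce
  then show False
    by (smt (verit) powr_ge_zero)
qed

lemma eventually_le_bigF_powr:
  assumes "1 < a" "0 < c" and "\<forall>\<^sub>F x in at_top. f x * bigF f x powr a \<le> c"
  shows "\<exists>K. \<forall>\<^sub>F u in at_top. u \<le> K * bigF f u powr (1 - a)"
proof -
  obtain T where "0 < T" and bound: "\<And>x. T \<le> x \<Longrightarrow> f x * bigF f x powr a \<le> c"
    using eventually_at_top_threshold[OF assms(3), where b = 0] by blast
  define P where "P = bigF f T powr (1 - a)"
  define k where "k = (a - 1) / c"
  have "0 < P" "0 < k"
    using bigF_pos[OF \<open>0 < T\<close>] assms(1,2) by (simp_all add: P_def k_def)
  have "u \<le> (T / P + 1 / k) * bigF f u powr (1 - a)" if "T \<le> u" for u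
  proof -
    define G where "G = bigF f u powr (1 - a)"
    have linear: "P + k * (u - T) \<le> G"
      unfolding P_def k_def G_def using bigF_powr_ge_linear[OF \<open>0 < T\<close> that assms(1,2) bound] .
    moreover have "0 \<le> k * (u - T)"
      using \<open>0 < k\<close> that by simp
    ultimately have "T \<le> T / P * G"
      using \<open>0 < P\<close> \<open>0 < T\<close> by (simp add: field_simps mult_left_mono)
    moreover have "u - T \<le> G / k"
      using linear \<open>0 < P\<close> \<open>0 < k\<close> by (simp add: field_simps)
    ultimately show ?thesis
      unfolding G_def distrib_right by simp
  qed
  then show ?thesis
    by (intro exI eventually_mono[OF eventually_ge_at_top[of T]])
qed

end

locale blowup_nonlinearity_limit = blowup_nonlinearity +
  fixes f' :: "real \<Rightarrow> real" and q :: real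
  assumes has_derivative_within: "\<And>x. \<tau>0 \<le> x \<Longrightarrow> (f has_real_derivative f' x) (at x within {\<tau>0..})"
    and limit: "((\<lambda>u. f' u * bigF f u) \<longlongrightarrow> q) at_top"
begin

lemma has_derivative_at: "\<tau>0 < x \<Longrightarrow> (f has_real_derivative f' x) (at x)"
  using has_derivative_within[of x] at_within_interior[of x "{\<tau>0..}"]
  by (simp add: interior_real_atLeast)

lemma eventually_f_bigF_powr_ge:
  assumes "a < q"
  shows "\<exists>c>0. \<forall>\<^sub>F u in at_top. c \<le> f u * bigF f u powr a"
proof -
  obtain T where "\<tau>0 < T" and T: "\<And>x. T \<le> x \<Longrightarrow> a < f' x * bigF f x"
    using eventually_at_top_threshold[OF order_tendstoD(1)[OF limit assms], where b = \<tau>0] by blast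
  then have "0 < T"
    using \<tau>0_pos by simp
  have "f T * bigF f T powr a \<le> f u * bigF f u powr a" if "T \<le> u" for u
    using T has_derivative_at \<open>\<tau>0 < T\<close> by (intro f_bigF_powr_mono[OF \<open>0 < T\<close> that]) (auto intro: less_imp_le)
  moreover have "0 < f T * bigF f T powr a"
    using f_bigF_powr_pos[OF \<open>0 < T\<close>] .
  ultimately show ?thesis
    by (intro exI[where x = "f T * bigF f T powr a"] conjI eventually_mono[OF eventually_ge_at_top[of T]])
qed

lemma eventually_f_bigF_powr_le:
  assumes "q < a"
  shows "\<exists>c>0. \<forall>\<^sub>F u in at_top. f u * bigF f u powr a \<le> c"
proof -
  obtain T where "\<tau>0 < T" and T: "\<And>x. T \<le> x \<Longrightarrow> f' x * bigF f x < a"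
    using eventually_at_top_threshold[OF order_tendstoD(2)[OF limit assms], where b = \<tau>0] by blast
  then have "0 < T"
    using \<tau>0_pos by simp
  have "f u * bigF f u powr a \<le> f T * bigF f T powr a" if "T \<le> u" for u
    using T has_derivative_at \<open>\<tau>0 < T\<close> by (intro f_bigF_powr_antimono[OF \<open>0 < T\<close> that]) (auto intro: less_imp_le)
  moreover have "0 < f T * bigF f T powr a"
    using f_bigF_powr_pos[OF \<open>0 < T\<close>] .
  ultimately show ?thesis
    by (intro exI[where x = "f T * bigF f T powr a"] conjI eventually_mono[OF eventually_ge_at_top[of T]])
qed

lemma one_le_limit: "1 \<le> q"
proof (rule ccontr)
  assume "\<not> 1 \<le> q"
  then obtain c where "0 < c" "\<forall>\<^sub>F u in at_top. f u * bigF f u powr ((q + 1) / 2) \<le> c"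
    using eventually_f_bigF_powr_le[of "(q + 1) / 2"] by auto
  with f_bigF_powr_unbounded[of "(q + 1) / 2" c] \<open>\<not> 1 \<le> q\<close> show False
    by simp
qed

lemma eventually_f_bigF_bounds:
  assumes "0 < \<epsilon>" "\<epsilon> < q"
  shows "\<exists>c1>0. \<exists>c2 K. \<forall>\<^sub>F u in at_top.
           c1 * bigF f u powr (\<epsilon> - q) \<le> f u \<and> f u \<le> c2 * bigF f u powr (- \<epsilon> - q) \<and>
           u \<le> K * bigF f u powr (1 - q - \<epsilon>)"
proof -
  obtain c1 where "0 < c1" and lower: "\<forall>\<^sub>F u in at_top. c1 \<le> f u * bigF f u powr (q - \<epsilon>)"
    using eventually_f_bigF_powr_ge[of "q - \<epsilon>"] assms by auto
  obtain c2 where "0 < c2" and upper: "\<forall>\<^sub>F u in at_top. f u * bigF f u powr (q + \<epsilon>) \<le> c2"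
    using eventually_f_bigF_powr_le[of "q + \<epsilon>"] assms by auto
  obtain K where growth: "\<forall>\<^sub>F u in at_top. u \<le> K * bigF f u powr (1 - (q + \<epsilon>))"
    using eventually_le_bigF_powr[OF _ \<open>0 < c2\<close> upper] one_le_limit assms by auto
  have "\<forall>\<^sub>F u in at_top.
      c1 * bigF f u powr (\<epsilon> - q) \<le> f u \<and> f u \<le> c2 * bigF f u powr (- \<epsilon> - q) \<and>
      u \<le> K * bigF f u powr (1 - q - \<epsilon>)"
    using eventually_gt_at_top[of 0] lower upper growth
  proof eventually_elim
    case (elim u)
    then have "0 < bigF f u"
      by (simp add: bigF_pos)
    have "- (q - \<epsilon>) = \<epsilon> - q" "- (q + \<epsilon>) = - \<epsilon> - q" "1 - (q + \<epsilon>) = 1 - q - \<epsilon>"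
      by simp_all
    then show ?case
      using elim le_mult_powr_iff[OF \<open>0 < bigF f u\<close>, of c1 "f u" "q - \<epsilon>"]
        mult_powr_le_iff[OF \<open>0 < bigF f u\<close>, of "f u" "q + \<epsilon>" c2]
      by metis
  qed
  then show ?thesis
    using \<open>0 < c1\<close> by blast
qed

end

theorem lemma3p1:
  fixes f f' :: "real \<Rightarrow> real" and \<tau>0 q :: real
  assumes nonneg: "\<forall>u\<ge>0. f u \<ge> 0"
    and M_cont: "continuous_on {0..} f"
    and M_mono: "mono_on {0..} f"
    and M_pos: "\<forall>u>0. f u > 0"
    and S_tau: "\<tau>0 > 0"
    and S_deriv: "\<forall>x\<ge>\<tau>0. (f has_real_derivative f' x) (at x within {\<tau>0..})"
    and S_C1: "continuous_on {\<tau>0..} f'"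
    and S_int: "(\<lambda>s. 1 / f s) integrable_on {\<tau>0..}"
    and L: "((\<lambda>u. f' u * bigF f u) \<longlongrightarrow> q) at_top"
  shows "\<forall>\<epsilon>. 0 < \<epsilon> \<and> \<epsilon> < q \<longrightarrow>
           (\<exists>C\<ge>1. \<forall>\<^sub>F \<sigma> in at_right 0.
              inverse C * \<sigma> powr (\<epsilon> - q) \<le> f (bigF_inv f \<sigma>) \<and>
              f (bigF_inv f \<sigma>) \<le> C * \<sigma> powr (- \<epsilon> - q) \<and>
              bigF_inv f \<sigma> \<le> C * \<sigma> powr (1 - q - \<epsilon>))"
proof (intro allI impI)
  \<comment> \<open>nonneg follows from M_pos and M_cont.\<close>
  interpret blowup_nonlinearity_limit f \<tau>0 f' q
    using M_cont M_mono M_pos S_tau S_int S_deriv L by unfold_locales auto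
  fix \<epsilon> :: real assume "0 < \<epsilon> \<and> \<epsilon> < q"
  then obtain c1 c2 K where "0 < c1" and bounds: "\<forall>\<^sub>F u in at_top.
      c1 * bigF f u powr (\<epsilon> - q) \<le> f u \<and> f u \<le> c2 * bigF f u powr (- \<epsilon> - q) \<and>
      u \<le> K * bigF f u powr (1 - q - \<epsilon>)"
    using eventually_f_bigF_bounds by blast
  define C where "C = max (max 1 (1 / c1)) (max c2 K)"
  have "inverse C \<le> c1" "c2 \<le> C" "K \<le> C"
    using le_imp_inverse_le[of "1 / c1" C] \<open>0 < c1\<close> by (simp_all add: C_def)
  have "\<forall>\<^sub>F \<sigma> in at_right 0.
      inverse C * \<sigma> powr (\<epsilon> - q) \<le> f (bigF_inv f \<sigma>) \<and> f (bigF_inv f \<sigma>) \<le> C * \<sigma> powr (- \<epsilon> - q) \<and>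
      bigF_inv f \<sigma> \<le> C * \<sigma> powr (1 - q - \<epsilon>)"
    using eventually_compose_filterlim[OF bounds filterlim_bigF_inv_at_top] eventually_bigF_bigF_inv
  proof eventually_elim
    case (elim \<sigma>)
    have "inverse C * \<sigma> powr (\<epsilon> - q) \<le> c1 * \<sigma> powr (\<epsilon> - q)"
      "c2 * \<sigma> powr (- \<epsilon> - q) \<le> C * \<sigma> powr (- \<epsilon> - q)"
      "K * \<sigma> powr (1 - q - \<epsilon>) \<le> C * \<sigma> powr (1 - q - \<epsilon>)"
      using \<open>inverse C \<le> c1\<close> \<open>c2 \<le> C\<close> \<open>K \<le> C\<close> by (simp_all add: mult_right_mono)
    with elim(1) show ?case
      unfolding elim(2) by linarith
  qed
  moreover have "1 \<le> C"
    by (simp add: C_def)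
  ultimately show "\<exists>C\<ge>1. \<forall>\<^sub>F \<sigma> in at_right 0.
      inverse C * \<sigma> powr (\<epsilon> - q) \<le> f (bigF_inv f \<sigma>) \<and> f (bigF_inv f \<sigma>) \<le> C * \<sigma> powr (- \<epsilon> - q) \<and>
      bigF_inv f \<sigma> \<le> C * \<sigma> powr (1 - q - \<epsilon>)"
    by blast
qed

end
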